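(* Let $s$ be a positive integer and $P(z)=1+\sum_{n=1}^s a_nz^n$ with real coefficients $a_n$. Let $r>0$ and suppose $P^{(k)}(-r)\ge 0$ for all $k=0,1,\dots,s$. Then for every $1\le n\le s$, \[ 0\le a_n\le \frac{\binom{s}{n}}{r^n}. \] Moreover, if $a_n=\binom{s}{n}/r^n$ for at least one $n$ with $1\le n\le s$, then $P(z)=\left(1+\frac{z}{r}\right)^s$. *)

theory Defs
  imports "HOL-Computational_Algebra.Polynomial"
begin

end

theory Submission
  imports Defs
begin

text \<open>Expand P in powers of 1 + z/r: P(z) = \<Sum>k w_k (1 + z/r)^k with w_k = P^(k)(-r) r^k / k!.
  The weights are nonnegative and sum to P(0) = 1, and a_n = \<Sum>k w_k C(k,n) / r^n is a weighted
  average of the values C(k,n) / r^n \<le> C(s,n) / r^n. Since C(k,n) < C(s,n) for k < s, equality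
  puts all the weight on k = s.\<close>

lemma binomial_strict_right_mono:
  assumes "m < n" "0 < k" "k \<le> n"
  shows "m choose k < n choose k"
proof -
  obtain t where t: "n = Suc t" using assms by (cases n) auto
  obtain j where j: "k = Suc j" using assms by (cases k) auto
  have "m choose k \<le> t choose k" using assms t by (intro binomial_right_mono) simp
  moreover have "0 < t choose j" using assms t j by simp
  ultimately show ?thesis unfolding t j binomial_Suc_Suc by linarith
qed

lemma coeff_one_linear_power:
  "coeff ([:1, b:] ^ k) n = of_nat (k choose n) * (b :: 'a :: comm_semiring_1) ^ n"
proof (cases "n \<le> k")
  case True
  then show ?thesis by (simp add: coeff_linear_poly_power)
next
  case False
  have "degree ([:1, b:] ^ k) \<le> k"
    using degree_power_le[of "[:1, b:]" k] by (simp split: if_splits)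
  with False have "degree ([:1, b:] ^ k) < n" by simp
  with False show ?thesis by (simp add: coeff_eq_0 binomial_eq_0)
qed

lemma pcompose_power_left: "pcompose (p ^ k) q = pcompose p q ^ k"
  by (induction k) (simp_all add: pcompose_1 pcompose_mult)

lemma higher_pderiv_pcompose_shift:
  "(pderiv ^^ k) (pcompose p [:c, 1:]) = pcompose ((pderiv ^^ k) p) [:c, 1 :: 'a :: idom:]"
  by (induction k) (simp_all add: pderiv_pcompose pderiv_pCons)

lemma poly_taylor_expansion:
  fixes p :: "'a :: field_char_0 poly"
  assumes "degree p \<le> s"
  shows "p = (\<Sum>k\<le>s. smult (poly ((pderiv ^^ k) p) c / fact k) ([:-c, 1:] ^ k))"
proof -
  define q where "q = pcompose p [:c, 1:]"
  have "degree q \<le> s" using assms by (simp add: q_def degree_pcompose)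
  have coeff_q: "coeff q k = poly ((pderiv ^^ k) p) c / fact k" for k
  proof -
    have "poly ((pderiv ^^ k) p) c = poly ((pderiv ^^ k) q) 0"
      by (simp add: q_def higher_pderiv_pcompose_shift poly_pcompose)
    also have "\<dots> = fact k * coeff q k"
      by (simp add: poly_0_coeff_0 coeff_higher_pderiv pochhammer_fact)
    finally show ?thesis by simp
  qed
  have "p = pcompose q [:-c, 1:]"
    by (simp add: q_def pcompose_pCons flip: pcompose_assoc)
  also have "q = (\<Sum>k\<le>s. monom (coeff q k) k)"
    using poly_as_sum_of_monoms'[OF \<open>degree q \<le> s\<close>] by simp
  finally show ?thesis
    by (simp add: coeff_q pcompose_sum monom_altdef pcompose_smult pcompose_power_left pcompose_pCons)
qed

lemma weighted_binomial_sum_eq_imp_weight_zero: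
  fixes w :: "nat \<Rightarrow> 'a :: linordered_idom"
  assumes nonneg: "\<forall>k\<le>s. 0 \<le> w k" and "0 < n" "n \<le> s"
    and eq: "(\<Sum>k\<le>s. w k * of_nat (k choose n)) = (\<Sum>k\<le>s. w k) * of_nat (s choose n)"
    and "k < s"
  shows "w k = 0"
proof -
  let ?gap = "\<lambda>k. w k * (of_nat (s choose n) - of_nat (k choose n))"
  have "(\<Sum>k\<le>s. ?gap k) = 0"
    using eq by (simp add: algebra_simps sum_subtractf sum_distrib_right)
  moreover have "\<forall>k\<in>{..s}. 0 \<le> ?gap k"
    using nonneg binomial_right_mono by (simp add: of_nat_mono)
  ultimately have "\<forall>k\<in>{..s}. ?gap k = 0"
    using sum_nonneg_eq_0_iff[of "{..s}" ?gap] by simp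
  then have "?gap k = 0"
    using \<open>k < s\<close> by (meson atMost_iff less_imp_le)
  moreover have "k choose n < s choose n"
    using assms by (intro binomial_strict_right_mono) simp_all
  ultimately show ?thesis by simp
qed

definition taylor_weight :: "real poly \<Rightarrow> real \<Rightarrow> nat \<Rightarrow> real" where
  "taylor_weight p r k = poly ((pderiv ^^ k) p) (- r) * r ^ k / fact k"

lemma expansion_in_powers_of_scaled_shift:
  assumes "degree p \<le> s" "r \<noteq> 0"
  shows "p = (\<Sum>k\<le>s. smult (taylor_weight p r k) ([:1, 1 / r:] ^ k))"
proof -
  have "[:r, 1:] ^ k = smult (r ^ k) ([:1, 1 / r:] ^ k)" for k
    using assms(2) by (simp flip: smult_power)
  then show ?thesis
    using poly_taylor_expansion[OF assms(1), of "- r"] by (simp add: taylor_weight_def)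
qed

lemma coeff_eq_weighted_binomial_sum:
  assumes "degree p \<le> s" "r \<noteq> 0"
  shows "coeff p n = (\<Sum>k\<le>s. taylor_weight p r k * of_nat (k choose n)) / r ^ n"
  by (subst expansion_in_powers_of_scaled_shift[OF assms])
     (simp add: coeff_sum coeff_one_linear_power power_one_over sum_divide_distrib)

context
  fixes p :: "real poly" and s :: nat and r :: real
  assumes degree_le: "degree p \<le> s" and r_pos: "r > 0"
    and higher_pderiv_nonneg: "\<forall>k\<le>s. 0 \<le> poly ((pderiv ^^ k) p) (- r)"
begin

private abbreviation "w \<equiv> taylor_weight p r"

private lemma weight_nonneg: "\<forall>k\<le>s. 0 \<le> w k"
  using higher_pderiv_nonneg r_pos by (simp add: taylor_weight_def)

private lemma coeff_0_eq_weight_sum: "coeff p 0 = (\<Sum>k\<le>s. w k)"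
  using coeff_eq_weighted_binomial_sum[OF degree_le, of r 0] r_pos by simp

lemma coeff_nonneg_le_binomial_bound:
  "0 \<le> coeff p n \<and> coeff p n \<le> coeff p 0 * of_nat (s choose n) / r ^ n"
proof -
  have "0 \<le> (\<Sum>k\<le>s. w k * of_nat (k choose n))"
    using weight_nonneg by (intro sum_nonneg) simp
  moreover have "(\<Sum>k\<le>s. w k * of_nat (k choose n)) \<le> (\<Sum>k\<le>s. w k * of_nat (s choose n))"
    using weight_nonneg binomial_right_mono by (intro sum_mono mult_left_mono) simp_all
  ultimately show ?thesis
    using coeff_eq_weighted_binomial_sum[OF degree_le, of r n] r_pos
    by (simp add: coeff_0_eq_weight_sum sum_distrib_right divide_right_mono)
qed

lemma eq_scaled_power_if_binomial_bound_attained: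
  assumes "0 < n" "n \<le> s" and attained: "coeff p n = coeff p 0 * of_nat (s choose n) / r ^ n"
  shows "p = smult (coeff p 0) ([:1, 1 / r:] ^ s)"
proof -
  have "(\<Sum>k\<le>s. w k * of_nat (k choose n)) = (\<Sum>k\<le>s. w k) * of_nat (s choose n)"
    using attained coeff_eq_weighted_binomial_sum[OF degree_le, of r n] r_pos
    by (simp add: coeff_0_eq_weight_sum)
  then have vanish: "w k = 0" if "k < s" for k
    using weighted_binomial_sum_eq_imp_weight_zero[OF weight_nonneg assms(1,2)] that by blast
  have top: "{..s} = insert s {..<s}" by auto
  have "p = (\<Sum>k\<in>insert s {..<s}. smult (w k) ([:1, 1 / r:] ^ k))"
    using expansion_in_powers_of_scaled_shift[OF degree_le] r_pos top by simp
  moreover have "coeff p 0 = (\<Sum>k\<in>insert s {..<s}. w k)"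
    using coeff_0_eq_weight_sum top by simp
  ultimately show ?thesis using vanish by simp
qed

end

theorem mainTheorem5:
  fixes s :: nat and a :: "nat \<Rightarrow> real" and r :: real and P :: "real poly"
  assumes hs: "s \<ge> 1"
    and hP: "P = 1 + (\<Sum>n=1..s. monom (a n) n)"
    and hr: "r > 0"
    and hder: "\<forall>k\<le>s. poly ((pderiv ^^ k) P) (- r) \<ge> 0"
  shows "(\<forall>n\<in>{1..s}. 0 \<le> a n \<and> a n \<le> real (s choose n) / r ^ n)
    \<and> ((\<exists>n\<in>{1..s}. a n = real (s choose n) / r ^ n)
         \<longrightarrow> P = [:1, 1 / r:] ^ s)"
proof -
  have coeff_P: "coeff P j = (if j = 0 then 1 else if j \<le> s then a j else 0)" for j
    unfolding hP by (cases j) (simp_all add: coeff_sum sum.delta)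
  have "degree P \<le> s"
    by (rule degree_le) (simp add: coeff_P)
  note bound = coeff_nonneg_le_binomial_bound[OF this hr hder]
    and attained = eq_scaled_power_if_binomial_bound_attained[OF this hr hder]
  have "0 \<le> a n \<and> a n \<le> real (s choose n) / r ^ n" if "n \<in> {1..s}" for n
    using bound[of n] that by (simp add: coeff_P)
  moreover have "P = [:1, 1 / r:] ^ s" if "n \<in> {1..s}" "a n = real (s choose n) / r ^ n" for n
    using attained[of n] that by (simp add: coeff_P)
  ultimately show ?thesis by blast
qed

end
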